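(* Let $d\ge1$, $m\ge1$, $\nu\ge2$ be integers, $\Lambda\subset\mathbb Z^d$ finite, containing $\mathbf 0$ and symmetric, $\boldsymbol\Sigma=\{\Sigma_{\mathbf k}\}_{\mathbf k\in\Lambda}$ with $\Sigma_{-\mathbf k}=\Sigma_{\mathbf k}^*\in\mathbb C^{m\times m}$, and $\Psi$ an $m\times m$ matrix-valued function on $\mathbb T^d$ with rational entries which is bounded and coercive. If the Feasibility Assumption holds, then there exists a real number $\alpha$ such that $\langle\mathbf Q,\boldsymbol\Sigma\rangle\ge\alpha$ for every $\mathbf Q\in\mathscr L_+$.
   Context: $\mathbb T^d=(-\pi,\pi]^d$; bounded and coercive means $aI_m\le\Psi(e^{i\boldsymbol\theta})\le bI_m$ for all $\boldsymbol\theta$, for some $b>a>0$. For $\mathbf Q=\{Q_{\mathbf k}\}_{\mathbf k\in\Lambda}$, $Q_{\mathbf k}\in\mathbb C^{m\times m}$, $Q_{-\mathbf k}=Q_{\mathbf k}^*$: $Q(e^{i\boldsymbol\theta})=\sum_{\mathbf k}Q_{\mathbf k}e^{-i\langle\mathbf k,\boldsymbol\theta\rangle}$, $\langle\mathbf k,\boldsymbol\theta\rangle=\sum_jk_j\theta_j$, $\langle\mathbf Q,\boldsymbol\Sigma\rangle=\sum_{\mathbf k}\operatorname{tr}(Q_{\mathbf k}\Sigma_{\mathbf k}^* )$. $\mathscr L_+=\{\mathbf Q:\nu\Psi^{-1}+Q\ge0\text{ on }\mathbb T^d,\ \text{not identically zero}\}$. Feasibility Assumption: there exists a Hermitian nonnegative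 definite matrix-valued measure $M_0$ on $\mathbb T^d$ with $\int e^{i\langle\mathbf k,\boldsymbol\theta\rangle}\mathrm dM_0=\Sigma_{\mathbf k}$ for all $\mathbf k\in\Lambda$, and a nonnegative scalar measure $\lambda$ with $\mathrm dM_0=M'_{0,\lambda}\mathrm d\lambda$ where $M'_{0,\lambda}$ is positive definite on some open ball $B\subset\mathbb T^d$ with $\lambda(B)>0$. *)

theory Defs
  imports "HOL-Analysis.Analysis"
begin

definition torus :: "(real^'d) set" where
  "torus = {\<theta>. \<forall>j. - pi < \<theta> $ j \<and> \<theta> $ j \<le> pi}"

definition ipair :: "int^'d \<Rightarrow> real^'d \<Rightarrow> real" where
  "ipair k \<theta> = (\<Sum>j\<in>UNIV. real_of_int (k $ j) * \<theta> $ j)"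

definition adjoint_mat :: "complex^'m^'m \<Rightarrow> complex^'m^'m" where
  "adjoint_mat A = (\<chi> i j. cnj (A $ j $ i))"

definition hermitian_mat :: "complex^'m^'m \<Rightarrow> bool" where
  "hermitian_mat A \<longleftrightarrow> adjoint_mat A = A"

definition psd_mat :: "complex^'m^'m \<Rightarrow> bool" where
  "psd_mat A \<longleftrightarrow> hermitian_mat A \<and>
     (\<forall>x::complex^'m. 0 \<le> Re (\<Sum>i\<in>UNIV. \<Sum>j\<in>UNIV. cnj (x $ i) * A $ i $ j * x $ j))"

definition pd_mat :: "complex^'m^'m \<Rightarrow> bool" where
  "pd_mat A \<longleftrightarrow> hermitian_mat A \<and>
     (\<forall>x::complex^'m. x \<noteq> 0 \<longrightarrow> 0 < Re (\<Sum>i\<in>UNIV. \<Sum>j\<in>UNIV. cnj (x $ i) * A $ i $ j * x $ j))"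

definition cmat_scale :: "complex \<Rightarrow> complex^'m^'m \<Rightarrow> complex^'m^'m" where
  "cmat_scale c A = (\<chi> i j. c * A $ i $ j)"

definition loewner_le :: "complex^'m^'m \<Rightarrow> complex^'m^'m \<Rightarrow> bool" where
  "loewner_le A B \<longleftrightarrow> psd_mat (B - A)"

definition trig_poly :: "(int^'d) set \<Rightarrow> (int^'d \<Rightarrow> complex) \<Rightarrow> real^'d \<Rightarrow> complex" where
  "trig_poly K c \<theta> = (\<Sum>k\<in>K. c k * exp (\<i> * complex_of_real (ipair k \<theta>)))"

text \<open>A scalar function on T^d is rational (a rational function of e^{i theta_1},...,e^{i theta_d})
  if it is a quotient p/q of trigonometric polynomials, q not identically zero on T^d,
  the quotient representing f wherever q does not vanish.\<close>
definition rational_on_torus :: "(real^'d \<Rightarrow> complex) \<Rightarrow> bool" where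
  "rational_on_torus f \<longleftrightarrow>
     (\<exists>K1 K2 p q. finite K1 \<and> finite K2 \<and> (\<exists>\<theta>\<in>torus. trig_poly K2 q \<theta> \<noteq> 0) \<and>
        (\<forall>\<theta>\<in>torus. trig_poly K2 q \<theta> \<noteq> 0 \<longrightarrow> f \<theta> = trig_poly K1 p \<theta> / trig_poly K2 q \<theta>))"

definition Qfun :: "(int^'d) set \<Rightarrow> (int^'d \<Rightarrow> complex^'m^'m) \<Rightarrow> real^'d \<Rightarrow> complex^'m^'m" where
  "Qfun \<Lambda> Q \<theta> = (\<Sum>k\<in>\<Lambda>. cmat_scale (exp (- \<i> * complex_of_real (ipair k \<theta>))) (Q k))"

definition pairing :: "(int^'d) set \<Rightarrow> (int^'d \<Rightarrow> complex^'m^'m) \<Rightarrow> (int^'d \<Rightarrow> complex^'m^'m) \<Rightarrow> complex" where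
  "pairing \<Lambda> Q \<Sigma> = (\<Sum>k\<in>\<Lambda>. trace (Q k ** adjoint_mat (\<Sigma> k)))"

definition herm_family :: "(int^'d) set \<Rightarrow> (int^'d \<Rightarrow> complex^'m^'m) \<Rightarrow> bool" where
  "herm_family \<Lambda> Q \<longleftrightarrow> (\<forall>k\<in>\<Lambda>. Q (- k) = adjoint_mat (Q k))"

definition Lplus :: "(int^'d) set \<Rightarrow> nat \<Rightarrow> (real^'d \<Rightarrow> complex^'m^'m) \<Rightarrow> (int^'d \<Rightarrow> complex^'m^'m) set" where
  "Lplus \<Lambda> \<nu> \<Psi> = {Q. herm_family \<Lambda> Q \<and>
      (\<forall>\<theta>\<in>torus. psd_mat (cmat_scale (of_nat \<nu>) (matrix_inv (\<Psi> \<theta>)) + Qfun \<Lambda> Q \<theta>)) \<and>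
      (\<exists>\<theta>\<in>torus. cmat_scale (of_nat \<nu>) (matrix_inv (\<Psi> \<theta>)) + Qfun \<Lambda> Q \<theta> \<noteq> 0)}"

text \<open>The matrix measure M_0 is represented through its density
  F = M'_{0,lambda} w.r.t. the nonnegative scalar measure lambda on T^d (dM_0 = F dlambda);
  Hermitian nonnegativity of M_0 is expressed as F(theta) Hermitian nonnegative definite.\<close>
definition feasible :: "(int^'d) set \<Rightarrow> (int^'d \<Rightarrow> complex^'m^'m) \<Rightarrow> bool" where
  "feasible \<Lambda> \<Sigma> \<longleftrightarrow>
     (\<exists>(mu::(real^'d) measure) (F::real^'d \<Rightarrow> complex^'m^'m).
        sets mu = sets (restrict_space borel torus) \<and>
        (\<forall>i j. integrable mu (\<lambda>\<theta>. F \<theta> $ i $ j)) \<and>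
        (\<forall>\<theta>\<in>torus. psd_mat (F \<theta>)) \<and>
        (\<forall>k\<in>\<Lambda>. \<forall>i j.
            (LINT \<theta>|mu. exp (\<i> * complex_of_real (ipair k \<theta>)) * F \<theta> $ i $ j) = \<Sigma> k $ i $ j) \<and>
        (\<exists>c r. 0 < r \<and> ball c r \<subseteq> torus \<and> emeasure mu (ball c r) > 0 \<and>
               (\<forall>\<theta>\<in>ball c r. pd_mat (F \<theta>))))"

end

(*
  Since aI \<le> \<Psi>, we have \<nu>\<Psi>\<inverse> \<le> (\<nu>/a)I, so every Q in L_+ satisfies Q(\<theta>) + (\<nu>/a)I \<ge> 0 on the torus.
  Writing dM_0 = F d\<mu>, the moment conditions turn <Q, \<Sigma>> into the integral of tr(Q(\<theta>) F(\<theta>)),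
  and tr(BF) \<ge> 0 for nonnegative definite B and F gives <Q, \<Sigma>> \<ge> -(\<nu>/a) \<integral> tr F d\<mu>,
  a bound independent of Q.
*)
theory Submission
  imports Defs
begin

definition hform :: "'a set \<Rightarrow> ('a \<Rightarrow> 'a \<Rightarrow> complex) \<Rightarrow> ('a \<Rightarrow> complex) \<Rightarrow> complex" where
  "hform I F x = (\<Sum>i\<in>I. \<Sum>j\<in>I. cnj (x i) * F i j * x j)"

lemma hform_restrict:
  assumes "finite I" "A \<subseteq> I" "\<And>i. i \<in> I - A \<Longrightarrow> x i = 0"
  shows "hform I F x = hform A F x"
  unfolding hform_def using assms
  by (intro sum.mono_neutral_cong_right) (auto intro!: sum.mono_neutral_cong_right)

lemma hform_insert:
  assumes "finite A" "a \<notin> A"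
  shows "hform (insert a A) F x = cnj (x a) * F a a * x a + cnj (x a) * (\<Sum>j\<in>A. F a j * x j)
           + (\<Sum>i\<in>A. cnj (x i) * F i a) * x a + hform A F x"
  using assms unfolding hform_def
  by (simp add: sum.distrib sum_distrib_left sum_distrib_right algebra_simps)

lemma hform_unit_vector:
  assumes "finite I" "a \<in> I"
  shows "hform I F (\<lambda>i. if i = a then 1 else 0) = F a a"
proof -
  have "hform I F (\<lambda>i. if i = a then 1 else 0) = hform {a} F (\<lambda>i. if i = a then 1 else 0)"
    using assms by (intro hform_restrict) auto
  then show ?thesis by (simp add: hform_def)
qed

lemma hform_pivot_zero:
  assumes "finite I" "a \<in> I" "j \<in> I" and nonneg: "\<forall>x. 0 \<le> Re (hform I F x)"
    and "F a a = 0" and herm: "F j a = cnj (F a j)"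
  shows "F a j = 0"
proof (rule ccontr)
  assume nz: "F a j \<noteq> 0"
  with \<open>F a a = 0\<close> have "j \<noteq> a" by auto
  define t where "t = (Re (F j j) + 1) / (2 * (cmod (F a j))\<^sup>2)"
  define x where "x i = (if i = a then - of_real t * F a j else if i = j then 1 else 0)" for i
  have "hform I F x = hform {a, j} F x"
    using assms(1-3) by (intro hform_restrict) (auto simp: x_def)
  also have "\<dots> = F j j - 2 * of_real t * (cnj (F a j) * F a j)"
    using \<open>j \<noteq> a\<close> \<open>F a a = 0\<close> herm
    by (simp add: hform_insert hform_def x_def algebra_simps)
  finally have "Re (hform I F x) = Re (F j j) - 2 * t * (cmod (F a j))\<^sup>2"
    by (simp add: cmod_def power2_eq_square)
  also have "\<dots> = -1"
    using nz by (simp add: t_def field_simps)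
  finally show False
    using nonneg[rule_format, of x] by simp
qed

lemma hform_schur_complement:
  assumes "finite A" "a \<notin> A" and herm: "\<forall>i j. F i j = cnj (F j i)"
  shows "hform (insert a A) F (x(a := - (\<Sum>j\<in>A. F a j * x j) / F a a))
           = hform A (\<lambda>i j. F i j - F i a * F a j / F a a) x"
proof -
  define d where "d = F a a"
  define u where "u = (\<Sum>j\<in>A. F a j * x j)"
  have "cnj d = d"
    using herm unfolding d_def by metis
  have cnj_row: "cnj (F a j) = F j a" for j
    using herm by metis
  then have cnj_u: "cnj u = (\<Sum>i\<in>A. cnj (x i) * F i a)"
    unfolding u_def by (simp add: mult.commute)
  have "hform A (\<lambda>i j. F i j - F i a * F a j / d) x = hform A F x - cnj u * u / d"
    unfolding hform_def cnj_u u_def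
    by (simp add: cnj_row algebra_simps sum_subtractf sum_distrib_left sum_distrib_right
        sum_divide_distrib)
  moreover have "hform (insert a A) F (x(a := - u / d)) = hform A F x - cnj u * u / d"
  proof -
    have "hform A F (x(a := - u / d)) = hform A F x"
      using \<open>a \<notin> A\<close> unfolding hform_def by (intro sum.cong) auto
    moreover have "(\<Sum>j\<in>A. F a j * (x(a := - u / d)) j) = u"
      using \<open>a \<notin> A\<close> unfolding u_def by (auto intro: sum.cong)
    moreover have "(\<Sum>i\<in>A. cnj ((x(a := - u / d)) i) * F i a) = cnj u"
      using \<open>a \<notin> A\<close> unfolding cnj_u by (auto intro: sum.cong)
    ultimately have "hform (insert a A) F (x(a := - u / d))
        = cnj (- u / d) * d * (- u / d) + cnj (- u / d) * u + cnj u * (- u / d) + hform A F x"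
      using assms(1,2) by (simp add: hform_insert d_def)
    also have "\<dots> = hform A F x - cnj u * u / d"
      using \<open>cnj d = d\<close> by (cases "d = 0") (simp_all add: field_simps)
    finally show ?thesis .
  qed
  ultimately show ?thesis
    unfolding d_def u_def by simp
qed

text \<open>Induction on I by Schur complements: F = F' + w w^*, where F' is nonnegative on I - {a} and
  vanishes on row and column a, so tr(BF) = tr(BF') + w^* B w.\<close>
lemma trace_mult_nonneg_hform:
  fixes B F :: "'a \<Rightarrow> 'a \<Rightarrow> complex"
  assumes "finite I" and "\<forall>x. 0 \<le> Re (hform I B x)" and "\<forall>x. 0 \<le> Re (hform I F x)"
    and "\<forall>i j. F i j = cnj (F j i)"
  shows "0 \<le> Re (\<Sum>i\<in>I. \<Sum>j\<in>I. B i j * F j i)"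
  using assms
proof (induction I arbitrary: B F rule: finite_induct)
  case empty
  show ?case by simp
next
  case (insert a A)
  note B_nonneg = insert.prems(1) and F_nonneg = insert.prems(2) and herm = insert.prems(3)
  define d where "d = F a a"
  define F' where "F' i j = F i j - F i a * F a j / d" for i j
  have "cnj d = d"
    using herm unfolding d_def by metis
  moreover have "0 \<le> Re d"
    using F_nonneg[rule_format, of "\<lambda>i. if i = a then 1 else 0"] insert.hyps
    by (simp add: hform_unit_vector d_def)
  ultimately have d_of_real: "d = of_real (Re d)" and "0 \<le> Re d"
    by (simp_all add: complex_eq_iff)
  have F'_herm: "\<forall>i j. F' i j = cnj (F' j i)"
    unfolding F'_def using herm \<open>cnj d = d\<close>
    by (metis complex_cnj_diff complex_cnj_divide complex_cnj_mult mult.commute)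
  have F'_nonneg: "\<forall>x. 0 \<le> Re (hform A F' x)"
    using F_nonneg hform_schur_complement[OF insert.hyps herm] unfolding F'_def d_def by metis
  have B_nonneg': "\<forall>x. 0 \<le> Re (hform A B x)"
  proof
    fix x
    have "hform (insert a A) B (x(a := 0)) = hform A B (x(a := 0))"
      using insert.hyps by (intro hform_restrict) auto
    also have "\<dots> = hform A B x"
      using insert.hyps unfolding hform_def by (intro sum.cong) auto
    finally show "0 \<le> Re (hform A B x)"
      using B_nonneg by metis
  qed
  \<comment> \<open>For d = 0 we get F' = F (as x / 0 = 0), whose row a vanishes by hform_pivot_zero.\<close>
  have F'_row: "F' a j = 0" and F'_col: "F' j a = 0" if "j \<in> insert a A" for j
  proof -
    have "F a j = 0 \<and> F j a = 0" if "d = 0"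
      using hform_pivot_zero[OF _ _ \<open>j \<in> insert a A\<close> F_nonneg] herm insert.hyps \<open>d = 0\<close>
      unfolding d_def by (metis complex_cnj_zero insertI1 finite_insert)
    then show "F' a j = 0" "F' j a = 0"
      unfolding F'_def d_def by (auto simp: mult.commute)
  qed
  define w where "w j = F j a / of_real (sqrt (Re d))" for j
  have F_split: "B i j * F j i = B i j * F' j i + cnj (w i) * B i j * w j" for i j
  proof -
    have sqrt_d: "of_real (sqrt (Re d)) * of_real (sqrt (Re d)) = d"
      using \<open>0 \<le> Re d\<close> by (subst (3) d_of_real) (simp flip: of_real_mult)
    have "cnj (F i a) = F a i"
      using herm by metis
    then have "w j * cnj (w i) = F j a * F a i / (of_real (sqrt (Re d)) * of_real (sqrt (Re d)))"
      unfolding w_def by simp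
    then have w_prod: "w j * cnj (w i) = F j a * F a i / d"
      unfolding sqrt_d .
    have "cnj (w i) * B i j * w j = B i j * (w j * cnj (w i))"
      by (simp only: ac_simps)
    then show ?thesis
      unfolding F'_def w_prod by (simp add: algebra_simps)
  qed
  have "(\<Sum>i\<in>insert a A. \<Sum>j\<in>insert a A. B i j * F j i)
      = (\<Sum>i\<in>insert a A. \<Sum>j\<in>insert a A. B i j * F' j i) + hform (insert a A) B w"
    unfolding F_split hform_def by (simp add: sum.distrib)
  also have "(\<Sum>i\<in>insert a A. \<Sum>j\<in>insert a A. B i j * F' j i) = (\<Sum>i\<in>A. \<Sum>j\<in>A. B i j * F' j i)"
    using insert.hyps by (simp add: F'_row F'_col)
  finally show ?case
    using insert.IH[OF B_nonneg' F'_nonneg F'_herm] B_nonneg[rule_format, of w] by simp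
qed

definition quad_form :: "complex^'n^'n \<Rightarrow> complex^'n \<Rightarrow> complex" where
  "quad_form A x = hform UNIV (\<lambda>i j. A $ i $ j) (($) x)"

lemma psd_mat_iff_quad_form: "psd_mat A \<longleftrightarrow> hermitian_mat A \<and> (\<forall>x. 0 \<le> Re (quad_form A x))"
  unfolding psd_mat_def quad_form_def hform_def ..

lemma hermitian_mat_entry: "hermitian_mat A \<Longrightarrow> A $ i $ j = cnj (A $ j $ i)"
  unfolding hermitian_mat_def adjoint_mat_def by (metis vec_lambda_beta)

lemma quad_form_add: "quad_form (A + B) x = quad_form A x + quad_form B x"
  by (simp add: quad_form_def hform_def algebra_simps sum.distrib)

lemma quad_form_diff: "quad_form (A - B) x = quad_form A x - quad_form B x"
  by (simp add: quad_form_def hform_def algebra_simps sum_subtractf)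

lemma quad_form_cmat_scale: "quad_form (cmat_scale c A) x = c * quad_form A x"
  by (simp add: quad_form_def hform_def cmat_scale_def sum_distrib_left algebra_simps)

lemma quad_form_eq_sum_mult_vec: "quad_form A x = (\<Sum>i\<in>UNIV. cnj (x $ i) * (A *v x) $ i)"
  by (simp add: quad_form_def hform_def matrix_vector_mult_def sum_distrib_left mult.assoc)

lemma Re_sum_cnj_mult_eq_inner: "Re (\<Sum>i\<in>UNIV. cnj (x $ i) * y $ i) = x \<bullet> y"
  by (simp add: inner_vec_def inner_complex_def)

lemma Re_quad_form_mat_1: "Re (quad_form (mat 1) x) = (norm x)\<^sup>2"
  unfolding quad_form_eq_sum_mult_vec matrix_vector_mul_lid Re_sum_cnj_mult_eq_inner
  by (simp add: power2_norm_eq_inner)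

lemma loewner_le_scaled_identity:
  assumes "loewner_le (cmat_scale (of_real a) (mat 1)) P"
  shows "a * (norm x)\<^sup>2 \<le> Re (quad_form P x)"
proof -
  have "0 \<le> Re (quad_form (P - cmat_scale (of_real a) (mat 1)) x)"
    using assms unfolding loewner_le_def psd_mat_iff_quad_form by blast
  then show ?thesis
    by (simp add: quad_form_diff quad_form_cmat_scale Re_quad_form_mat_1)
qed

lemma quad_form_matrix_inv_le:
  assumes "0 < a" and P: "loewner_le (cmat_scale (of_real a) (mat 1)) P"
  shows "Re (quad_form (matrix_inv P) x) \<le> (norm x)\<^sup>2 / a"
proof -
  have "P *v y = 0 \<Longrightarrow> y = 0" for y
    using loewner_le_scaled_identity[OF P, of y] \<open>0 < a\<close>
    by (auto simp: quad_form_eq_sum_mult_vec mult_le_0_iff)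
  then have "invertible P"
    by (simp add: invertible_left_inverse matrix_left_invertible_ker)
  then have "P ** matrix_inv P = mat 1"
    unfolding invertible_def matrix_inv_def by (rule someI_ex[THEN conjunct1])
  moreover define y where "y = matrix_inv P *v x"
  ultimately have "P *v y = x"
    by (simp add: matrix_vector_mul_assoc)
  have "Re (quad_form (matrix_inv P) x) = y \<bullet> x"
    unfolding quad_form_eq_sum_mult_vec Re_sum_cnj_mult_eq_inner y_def by (rule inner_commute)
  moreover have "a * (norm y)\<^sup>2 \<le> y \<bullet> x"
    using loewner_le_scaled_identity[OF P, of y]
    unfolding quad_form_eq_sum_mult_vec Re_sum_cnj_mult_eq_inner \<open>P *v y = x\<close> .
  moreover have "y \<bullet> x \<le> norm y * norm x"
    by (rule norm_cauchy_schwarz)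
  ultimately have "norm y * (a * norm y) \<le> norm y * norm x"
    by (simp add: power2_eq_square algebra_simps)
  then have "a * norm y \<le> norm x"
    by (cases "y = 0") (auto dest: mult_left_le_imp_le)
  then have "norm y * norm x \<le> (norm x)\<^sup>2 / a"
    using \<open>0 < a\<close> mult_left_mono[of "a * norm y" "norm x" "norm x"]
    by (simp add: field_simps power2_eq_square)
  with \<open>Re (quad_form (matrix_inv P) x) = y \<bullet> x\<close> \<open>y \<bullet> x \<le> norm y * norm x\<close> show ?thesis
    by linarith
qed

lemma trace_mult_psd_nonneg:
  fixes B F :: "complex^'n^'n"
  assumes "\<forall>x. 0 \<le> Re (quad_form B x)" and "psd_mat F"
  shows "0 \<le> Re (trace (B ** F))"
proof -
  have vec_nth_lambda: "($) (\<chi> i. x i) = x" for x :: "'n \<Rightarrow> complex"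
    by (simp add: fun_eq_iff)
  have B_nonneg: "\<forall>x. 0 \<le> Re (hform UNIV (\<lambda>i j. B $ i $ j) x)"
    using assms(1) unfolding quad_form_def by (metis vec_nth_lambda)
  have F_nonneg: "\<forall>x. 0 \<le> Re (hform UNIV (\<lambda>i j. F $ i $ j) x)"
    using assms(2) unfolding psd_mat_iff_quad_form quad_form_def by (metis vec_nth_lambda)
  have F_herm: "\<forall>i j. F $ i $ j = cnj (F $ j $ i)"
    using assms(2) hermitian_mat_entry unfolding psd_mat_iff_quad_form by blast
  have "trace (B ** F) = (\<Sum>i\<in>UNIV. \<Sum>j\<in>UNIV. B $ i $ j * F $ j $ i)"
    by (simp add: trace_def matrix_matrix_mult_def)
  then show ?thesis
    using trace_mult_nonneg_hform[OF finite B_nonneg F_nonneg F_herm] by simp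
qed

lemma trace_add_mult: "trace ((A + B) ** C) = trace (A ** C) + trace (B ** C)"
  by (simp add: trace_def matrix_matrix_mult_def distrib_right sum.distrib)

lemma trace_cmat_scale_mult: "trace (cmat_scale c A ** B) = c * trace (A ** B)"
  by (simp add: trace_def matrix_matrix_mult_def cmat_scale_def sum_distrib_left mult.assoc)

lemma Lplus_Qfun_shift_nonneg:
  assumes "Q \<in> Lplus \<Lambda> \<nu> \<Psi>" and "\<theta> \<in> torus" and "0 < a"
    and "loewner_le (cmat_scale (of_real a) (mat 1)) (\<Psi> \<theta>)"
  shows "0 \<le> Re (quad_form (Qfun \<Lambda> Q \<theta> + cmat_scale (of_real (real \<nu> / a)) (mat 1)) x)"
proof -
  have "0 \<le> Re (quad_form (cmat_scale (of_nat \<nu>) (matrix_inv (\<Psi> \<theta>)) + Qfun \<Lambda> Q \<theta>) x)"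
    using assms(1,2) unfolding Lplus_def psd_mat_iff_quad_form by blast
  moreover have "real \<nu> * Re (quad_form (matrix_inv (\<Psi> \<theta>)) x) \<le> real \<nu> * ((norm x)\<^sup>2 / a)"
    by (intro mult_left_mono quad_form_matrix_inv_le[OF assms(3,4)]) simp
  ultimately show ?thesis
    by (simp add: quad_form_add quad_form_cmat_scale Re_quad_form_mat_1)
qed

lemma continuous_on_ipair: "continuous_on UNIV (ipair k)"
  unfolding ipair_def by (intro continuous_intros)

lemma integrable_exp_ipair_mult:
  assumes "sets M = sets (restrict_space borel S)" and "integrable M f" and "Re c = 0"
  shows "integrable M (\<lambda>\<theta>. exp (c * of_real (ipair k \<theta>)) * f \<theta>)"
proof (rule Bochner_Integration.integrable_bound[OF assms(2)])
  have "(\<lambda>\<theta>. exp (c * of_real (ipair k \<theta>))) \<in> borel_measurable borel"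
    by (intro borel_measurable_continuous_onI continuous_intros continuous_on_ipair)
  then have "(\<lambda>\<theta>. exp (c * of_real (ipair k \<theta>))) \<in> borel_measurable M"
    using measurable_cong_sets[OF assms(1) refl] measurable_restrict_space1 by blast
  then show "(\<lambda>\<theta>. exp (c * of_real (ipair k \<theta>)) * f \<theta>) \<in> borel_measurable M"
    using borel_measurable_integrable[OF assms(2)] by measurable
  show "AE \<theta> in M. norm (exp (c * of_real (ipair k \<theta>)) * f \<theta>) \<le> norm (f \<theta>)"
    using assms(3) by (simp add: norm_mult norm_exp)
qed

lemma trace_Qfun_mult:
  "trace (Qfun \<Lambda> Q \<theta> ** A) = (\<Sum>k\<in>\<Lambda>. exp (- \<i> * of_real (ipair k \<theta>)) * trace (Q k ** A))"
proof -
  have "trace (Qfun \<Lambda> Q \<theta> ** A)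
      = (\<Sum>i\<in>UNIV. \<Sum>j\<in>UNIV. \<Sum>k\<in>\<Lambda>. exp (- \<i> * of_real (ipair k \<theta>)) * (Q k $ i $ j * A $ j $ i))"
    by (simp add: trace_def matrix_matrix_mult_def Qfun_def cmat_scale_def sum_distrib_right mult.assoc)
  also have "\<dots> = (\<Sum>k\<in>\<Lambda>. \<Sum>i\<in>UNIV. \<Sum>j\<in>UNIV. exp (- \<i> * of_real (ipair k \<theta>)) * (Q k $ i $ j * A $ j $ i))"
    by (subst sum.swap, rule sum.cong[OF refl], rule sum.swap)
  also have "\<dots> = (\<Sum>k\<in>\<Lambda>. exp (- \<i> * of_real (ipair k \<theta>)) * trace (Q k ** A))"
    by (simp add: trace_def matrix_matrix_mult_def sum_distrib_left)
  finally show ?thesis .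
qed

lemma integrable_exp_ipair_trace_mult:
  fixes F :: "real^'d \<Rightarrow> complex^'m^'m"
  assumes "sets M = sets (restrict_space borel S)" and "\<forall>i j. integrable M (\<lambda>\<theta>. F \<theta> $ i $ j)"
  shows "integrable M (\<lambda>\<theta>. exp (- \<i> * of_real (ipair k \<theta>)) * trace (A ** F \<theta>))"
proof -
  have expand: "exp (- \<i> * of_real (ipair k \<theta>)) * trace (A ** F \<theta>)
      = (\<Sum>i\<in>UNIV. \<Sum>j\<in>UNIV. A $ i $ j * (exp (- \<i> * of_real (ipair k \<theta>)) * F \<theta> $ j $ i))" for \<theta>
    by (simp add: trace_def matrix_matrix_mult_def sum_distrib_left mult.left_commute)
  show ?thesis
    unfolding expand using assms(2)
    by (intro Bochner_Integration.integrable_sum integrable_mult_right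
        integrable_exp_ipair_mult[OF assms(1)]) auto
qed

lemma integrable_trace_Qfun_mult:
  fixes F :: "real^'d \<Rightarrow> complex^'m^'m"
  assumes "sets M = sets (restrict_space borel S)" and "\<forall>i j. integrable M (\<lambda>\<theta>. F \<theta> $ i $ j)"
  shows "integrable M (\<lambda>\<theta>. trace (Qfun \<Lambda> Q \<theta> ** F \<theta>))"
  unfolding trace_Qfun_mult using integrable_exp_ipair_trace_mult[OF assms] by simp

lemma pairing_eq_integral_trace:
  fixes \<Lambda> :: "(int^'d) set" and \<Sigma> :: "int^'d \<Rightarrow> complex^'m^'m"
    and F :: "real^'d \<Rightarrow> complex^'m^'m"
  assumes sets_M: "sets M = sets (restrict_space borel S)"
    and int_F: "\<forall>i j. integrable M (\<lambda>\<theta>. F \<theta> $ i $ j)"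
    and herm_F: "\<forall>\<theta>\<in>S. hermitian_mat (F \<theta>)"
    and moment: "\<forall>k\<in>\<Lambda>. \<forall>i j.
      (LINT \<theta>|M. exp (\<i> * of_real (ipair k \<theta>)) * F \<theta> $ i $ j) = \<Sigma> k $ i $ j"
  shows "pairing \<Lambda> Q \<Sigma> = (LINT \<theta>|M. trace (Qfun \<Lambda> Q \<theta> ** F \<theta>))"
proof -
  have space_M: "space M = S"
    using sets_eq_imp_space_eq[OF sets_M] by (simp add: space_restrict_space)
  define e where "e (k::int^'d) (\<theta>::real^'d) = exp (- \<i> * of_real (ipair k \<theta>))" for k \<theta>
  have int_eF: "integrable M (\<lambda>\<theta>. e k \<theta> * F \<theta> $ i $ j)" for k i j
    unfolding e_def using integrable_exp_ipair_mult[OF sets_M, of "\<lambda>\<theta>. F \<theta> $ i $ j" "- \<i>"] int_F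
    by simp
  have adjoint_moment: "adjoint_mat (\<Sigma> k) $ j $ i = (LINT \<theta>|M. e k \<theta> * F \<theta> $ j $ i)"
    if "k \<in> \<Lambda>" for k i j
  proof -
    have "adjoint_mat (\<Sigma> k) $ j $ i = cnj (LINT \<theta>|M. exp (\<i> * of_real (ipair k \<theta>)) * F \<theta> $ i $ j)"
      using moment that by (simp add: adjoint_mat_def)
    also have "\<dots> = (LINT \<theta>|M. cnj (exp (\<i> * of_real (ipair k \<theta>)) * F \<theta> $ i $ j))"
      by (rule Bochner_Integration.integral_cnj[symmetric])
    also have "\<dots> = (LINT \<theta>|M. e k \<theta> * F \<theta> $ j $ i)"
    proof (rule Bochner_Integration.integral_cong)
      fix \<theta> assume "\<theta> \<in> space M"
      then have "cnj (F \<theta> $ i $ j) = F \<theta> $ j $ i"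
        using herm_F hermitian_mat_entry[of "F \<theta>" j i] space_M by simp
      then show "cnj (exp (\<i> * of_real (ipair k \<theta>)) * F \<theta> $ i $ j) = e k \<theta> * F \<theta> $ j $ i"
        by (simp add: e_def exp_cnj)
    qed simp
    finally show ?thesis .
  qed
  have trace_expand: "e k \<theta> * trace (A ** F \<theta>) = (\<Sum>i\<in>UNIV. \<Sum>j\<in>UNIV. A $ i $ j * (e k \<theta> * F \<theta> $ j $ i))"
    for k \<theta> and A :: "complex^'m^'m"
    by (simp add: trace_def matrix_matrix_mult_def sum_distrib_left mult.left_commute)
  have int_e_trace: "integrable M (\<lambda>\<theta>. e k \<theta> * trace (A ** F \<theta>))" for k A
    unfolding e_def by (rule integrable_exp_ipair_trace_mult[OF sets_M int_F])
  have trace_adjoint: "trace (Q k ** adjoint_mat (\<Sigma> k)) = (LINT \<theta>|M. e k \<theta> * trace (Q k ** F \<theta>))"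
    if "k \<in> \<Lambda>" for k
  proof -
    have "trace (Q k ** adjoint_mat (\<Sigma> k)) = (\<Sum>i\<in>UNIV. \<Sum>j\<in>UNIV. Q k $ i $ j * adjoint_mat (\<Sigma> k) $ j $ i)"
      by (simp add: trace_def matrix_matrix_mult_def)
    also have "\<dots> = (\<Sum>i\<in>UNIV. \<Sum>j\<in>UNIV. (LINT \<theta>|M. Q k $ i $ j * (e k \<theta> * F \<theta> $ j $ i)))"
      using that by (simp add: adjoint_moment)
    also have "\<dots> = (LINT \<theta>|M. e k \<theta> * trace (Q k ** F \<theta>))"
      unfolding trace_expand using int_eF by (simp add: integral_sum)
    finally show ?thesis .
  qed
  have "pairing \<Lambda> Q \<Sigma> = (\<Sum>k\<in>\<Lambda>. (LINT \<theta>|M. e k \<theta> * trace (Q k ** F \<theta>)))"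
    unfolding pairing_def using trace_adjoint by simp
  also have "\<dots> = (LINT \<theta>|M. (\<Sum>k\<in>\<Lambda>. e k \<theta> * trace (Q k ** F \<theta>)))"
    using int_e_trace by (simp add: integral_sum)
  also have "\<dots> = (LINT \<theta>|M. trace (Qfun \<Lambda> Q \<theta> ** F \<theta>))"
    by (simp add: trace_Qfun_mult e_def)
  finally show ?thesis .
qed

lemma pairing_lower_bound:
  fixes F :: "real^'d \<Rightarrow> complex^'m^'m"
  assumes "0 < a" and \<Psi>_ge: "\<forall>\<theta>\<in>torus. loewner_le (cmat_scale (of_real a) (mat 1)) (\<Psi> \<theta>)"
    and sets_M: "sets M = sets (restrict_space borel torus)"
    and int_F: "\<forall>i j. integrable M (\<lambda>\<theta>. F \<theta> $ i $ j)"
    and psd_F: "\<forall>\<theta>\<in>torus. psd_mat (F \<theta>)"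
    and moment: "\<forall>k\<in>\<Lambda>. \<forall>i j.
      (LINT \<theta>|M. exp (\<i> * of_real (ipair k \<theta>)) * F \<theta> $ i $ j) = \<Sigma> k $ i $ j"
    and Q: "Q \<in> Lplus \<Lambda> \<nu> \<Psi>"
  shows "- (real \<nu> / a) * (LINT \<theta>|M. Re (trace (F \<theta>))) \<le> Re (pairing \<Lambda> Q \<Sigma>)"
proof -
  define c where "c = real \<nu> / a"
  have space_M: "space M = torus"
    using sets_eq_imp_space_eq[OF sets_M] by (simp add: space_restrict_space)
  have pointwise: "- c * Re (trace (F \<theta>)) \<le> Re (trace (Qfun \<Lambda> Q \<theta> ** F \<theta>))"
    if "\<theta> \<in> torus" for \<theta>
  proof -
    have "0 \<le> Re (trace ((Qfun \<Lambda> Q \<theta> + cmat_scale (of_real c) (mat 1)) ** F \<theta>))"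
      using Lplus_Qfun_shift_nonneg[OF Q that \<open>0 < a\<close>] \<Psi>_ge psd_F that
      unfolding c_def by (intro trace_mult_psd_nonneg) auto
    also have "trace ((Qfun \<Lambda> Q \<theta> + cmat_scale (of_real c) (mat 1)) ** F \<theta>)
        = trace (Qfun \<Lambda> Q \<theta> ** F \<theta>) + of_real c * trace (F \<theta>)"
      by (simp add: trace_add_mult trace_cmat_scale_mult)
    finally show ?thesis
      by simp
  qed
  have int_trace_F: "integrable M (\<lambda>\<theta>. trace (F \<theta>))"
    using int_F by (simp add: trace_def)
  have int_trace_QF: "integrable M (\<lambda>\<theta>. trace (Qfun \<Lambda> Q \<theta> ** F \<theta>))"
    by (rule integrable_trace_Qfun_mult[OF sets_M int_F])
  have herm_F: "\<forall>\<theta>\<in>torus. hermitian_mat (F \<theta>)"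
    using psd_F unfolding psd_mat_def by blast
  have "(LINT \<theta>|M. - c * Re (trace (F \<theta>))) \<le> (LINT \<theta>|M. Re (trace (Qfun \<Lambda> Q \<theta> ** F \<theta>)))"
    using int_trace_F int_trace_QF pointwise space_M by (intro integral_mono) auto
  also have "\<dots> = Re (pairing \<Lambda> Q \<Sigma>)"
    unfolding pairing_eq_integral_trace[OF sets_M int_F herm_F moment] using int_trace_QF by simp
  finally show ?thesis
    unfolding c_def by simp
qed

theorem lemma5p4:
  fixes \<Lambda> :: "(int^'d) set"
    and \<Sigma> :: "int^'d \<Rightarrow> complex^'m^'m"
    and \<Psi> :: "real^'d \<Rightarrow> complex^'m^'m"
    and \<nu> :: nat
  assumes "\<nu> \<ge> 2"
    and "finite \<Lambda>" and "0 \<in> \<Lambda>" and "\<forall>k\<in>\<Lambda>. - k \<in> \<Lambda>"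
    and "herm_family \<Lambda> \<Sigma>"
    and "\<forall>i j. rational_on_torus (\<lambda>\<theta>. \<Psi> \<theta> $ i $ j)"
    and "\<exists>a b. 0 < a \<and> a < b \<and>
           (\<forall>\<theta>\<in>torus. loewner_le (cmat_scale (of_real a) (mat 1)) (\<Psi> \<theta>) \<and>
                      loewner_le (\<Psi> \<theta>) (cmat_scale (of_real b) (mat 1)))"
    and "feasible \<Lambda> \<Sigma>"
  shows "\<exists>\<alpha>::real. \<forall>Q\<in>Lplus \<Lambda> \<nu> \<Psi>. Re (pairing \<Lambda> Q \<Sigma>) \<ge> \<alpha>"
proof -
  obtain a where a: "0 < a" and \<Psi>_ge: "\<forall>\<theta>\<in>torus. loewner_le (cmat_scale (of_real a) (mat 1)) (\<Psi> \<theta>)"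
    using assms(7) by blast
  obtain M :: "(real^'d) measure" and F :: "real^'d \<Rightarrow> complex^'m^'m"
    where sets_M: "sets M = sets (restrict_space borel torus)"
      and int_F: "\<forall>i j. integrable M (\<lambda>\<theta>. F \<theta> $ i $ j)"
      and psd_F: "\<forall>\<theta>\<in>torus. psd_mat (F \<theta>)"
      and moment: "\<forall>k\<in>\<Lambda>. \<forall>i j. (LINT \<theta>|M. exp (\<i> * of_real (ipair k \<theta>)) * F \<theta> $ i $ j) = \<Sigma> k $ i $ j"
    using assms(8) unfolding feasible_def by blast
  show ?thesis
    using pairing_lower_bound[OF a \<Psi>_ge sets_M int_F psd_F moment] by blast
qed

end
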